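(* Let $n,a,h,t$ be positive integers with $h\le n$ and $a\le t\le ah$. The code $$\mathcal C(n;t)=\Big\{\mathbf x\in\mathbb Z^n:\ \sum_{i=1}^n x_i\equiv 0 \pmod{t+1}\Big\}$$ is an $(a,h,t)$-AED code in $\mathbb Z^n$, its density equals $\mu(\mathcal C(n;t))=\frac{1}{t+1}$, and it is optimal: no $(a,h,t)$-AED code in $\mathbb Z^n$ has upper density larger than $\frac{1}{t+1}$.
   Context: Channel over the alphabet $\mathbb Z$: an input $\mathbf x=(x_1,\dots,x_n)\in\mathbb Z^n$ can produce any output $\mathbf y\in\mathbb Z^n$ satisfying (1) $0\le y_i-x_i\le a$ for all $i$; (2) $\sum_{i=1}^n \mathbb 1_{\{y_i\ne x_i\}}\le h$; (3) $\sum_{i=1}^n (y_i-x_i)\le t$. $\mathrm{Out}(\mathbf x)$ denotes the set of all such outputs $\mathbf y$. A code $\mathcal C\subseteq\mathbb Z^n$ is an $(a,h,t)$-AED code if for all $\mathbf x\in\mathcal C$ and all $\mathbf y\in\mathrm{Out}(\mathbf x)$ with $\mathbf y\neq\mathbf x$, we have $\mathbf y\notin\mathcal C$. The density of $\mathcal C\subseteq\mathbb Z^n$ is $\mu(\mathcal C)=\lim_{k\to\infty}\frac{|\mathcal C\cap\{-k,\dots,k\}^n|}{(2k+1)^n}$ when the limit exists; the upper density $\overline{\mu}(\mathcal C)$ is defined with $\limsup$ in place of $\lim$. *)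

theory Defs
  imports "HOL-Analysis.Analysis" "HOL-Library.Liminf_Limsup"
begin

text \<open>Words of length n over the alphabet of integers are represented as integer lists
  of length n; a code in Z^n is a set of such lists.\<close>

definition words :: "nat \<Rightarrow> int list set" where
  "words n = {x. length x = n}"

definition Out :: "int \<Rightarrow> nat \<Rightarrow> int \<Rightarrow> int list \<Rightarrow> int list set" where
  "Out a h t x = {y. length y = length x
      \<and> (\<forall>i<length x. 0 \<le> y ! i - x ! i \<and> y ! i - x ! i \<le> a)
      \<and> card {i. i < length x \<and> y ! i \<noteq> x ! i} \<le> h
      \<and> (\<Sum>i<length x. y ! i - x ! i) \<le> t}"

definition AED_code :: "nat \<Rightarrow> int \<Rightarrow> nat \<Rightarrow> int \<Rightarrow> int list set \<Rightarrow> bool" where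
  "AED_code n a h t C \<longleftrightarrow> C \<subseteq> words n \<and>
     (\<forall>x\<in>C. \<forall>y\<in>Out a h t x. y \<noteq> x \<longrightarrow> y \<notin> C)"

definition cube :: "nat \<Rightarrow> nat \<Rightarrow> int list set" where
  "cube n k = {x \<in> words n. \<forall>i<n. - int k \<le> x ! i \<and> x ! i \<le> int k}"

definition density_ratio :: "nat \<Rightarrow> int list set \<Rightarrow> nat \<Rightarrow> real" where
  "density_ratio n C k = real (card (C \<inter> cube n k)) / real (2 * k + 1) ^ n"

definition has_density :: "nat \<Rightarrow> int list set \<Rightarrow> real \<Rightarrow> bool" where
  "has_density n C d \<longleftrightarrow> (density_ratio n C \<longlongrightarrow> d) sequentially"

definition upper_density :: "nat \<Rightarrow> int list set \<Rightarrow> ereal" where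
  "upper_density n C = limsup (\<lambda>k. ereal (density_ratio n C k))"

definition sum_code :: "nat \<Rightarrow> int \<Rightarrow> int list set" where
  "sum_code n t = {x \<in> words n. (\<Sum>i<n. x ! i) mod (t + 1) = 0}"

end

theory Submission
  imports Defs
begin

text \<open>A nonzero admissible error raises the coordinate sum by some amount in \<open>1..t\<close>, so it
  leaves the code \<open>C(n;t)\<close>. Every line parallel to the first axis meets \<open>C(n;t)\<close> in
  a fraction \<open>1/(t+1)\<close> of its points, up to one point, which gives the density.

  For optimality, let \<open>s\<^sub>j\<close> (\<open>0 \<le> j \<le> t\<close>) be the error of weight \<open>j\<close> that puts
  \<open>a\<close> on the coordinates \<open>0, 1, ...\<close> in turn. If \<open>x + s\<^sub>i = x' + s\<^sub>j\<close> for codewords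
  \<open>x, x'\<close> and \<open>i \<le> j\<close>, then \<open>s\<^sub>j - s\<^sub>i\<close> is an admissible error (entries in \<open>[0, a]\<close>,
  support in the first \<open>\<lceil>j/a\<rceil> \<le> h\<close> coordinates, weight \<open>j - i \<le> t\<close>), so \<open>x = x'\<close>
  and \<open>i = j\<close>. Hence the words \<open>x + s\<^sub>j\<close> are pairwise distinct, and they lie in a cube
  enlarged by \<open>a\<close>: \<open>(t + 1) |C \<inter> [-k, k]\<^sup>n| \<le> (2(k + a) + 1)\<^sup>n\<close>.\<close>

lemma cube_eq: "cube n k = {x. set x \<subseteq> {- int k..int k} \<and> length x = n}"
  unfolding cube_def words_def by (auto simp: subset_iff in_set_conv_nth)

lemma finite_cube: "finite (cube n k)"
  unfolding cube_eq by (rule finite_lists_length_eq) simp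

lemma card_cube: "card (cube n k) = (2 * k + 1) ^ n"
proof -
  have "nat (2 * int k + 1) = 2 * k + 1" by (simp add: nat_eq_iff)
  then show ?thesis unfolding cube_eq by (simp add: card_lists_length_eq)
qed

lemma card_multiples_in_interval:
  fixes m u v c :: int
  assumes "m > 0" "u \<le> v"
  shows "\<bar>real (card {z \<in> {u..v}. m dvd z + c}) - (v - u + 1) / m\<bar> < 1"
proof -
  define lo hi where "lo = \<lceil>(u + c) / m\<rceil>" and "hi = \<lceil>(v + 1 + c) / m\<rceil>"
  have range_iff: "q \<in> {lo..<hi} \<longleftrightarrow> m * q - c \<in> {u..v}" for q
  proof -
    have "lo \<le> q \<longleftrightarrow> u + c \<le> m * q" "q < hi \<longleftrightarrow> m * q < v + 1 + c"
      using assms(1) unfolding lo_def hi_def ceiling_le_iff less_ceiling_iff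
      by (auto simp: pos_divide_le_eq pos_less_divide_eq mult.commute
          simp flip: of_int_add of_int_mult)
    then show ?thesis by auto
  qed
  have "{z \<in> {u..v}. m dvd z + c} = (\<lambda>q. m * q - c) ` {lo..<hi}"
  proof (intro equalityI subsetI)
    fix z assume z: "z \<in> {z \<in> {u..v}. m dvd z + c}"
    then obtain q where "z = m * q - c" by (auto simp: dvd_def algebra_simps)
    with z range_iff show "z \<in> (\<lambda>q. m * q - c) ` {lo..<hi}" by blast
  next
    fix z assume "z \<in> (\<lambda>q. m * q - c) ` {lo..<hi}"
    with range_iff show "z \<in> {z \<in> {u..v}. m dvd z + c}" by fastforce
  qed
  moreover have "inj_on (\<lambda>q. m * q - c) {lo..<hi}"
    using assms(1) by (auto simp: inj_on_def)
  moreover have "lo \<le> hi"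
    unfolding lo_def hi_def using assms by (intro ceiling_mono divide_right_mono) auto
  ultimately have "real (card {z \<in> {u..v}. m dvd z + c}) = hi - lo"
    by (simp add: card_image)
  moreover have "(v - u + 1) / m = (v + 1 + c) / m - (u + c) / m"
    by (simp add: diff_divide_distrib add_divide_distrib)
  ultimately show ?thesis
    using ceiling_correct[of "(u + c) / m"] ceiling_correct[of "(v + 1 + c) / m"]
    unfolding lo_def hi_def by linarith
qed

lemma sum_code_eq: "sum_code n t = {x. length x = n \<and> (t + 1) dvd sum_list x}"
  unfolding sum_code_def words_def
  by (auto simp: sum_list_sum_nth atLeast0LessThan dvd_eq_mod_eq_0)

lemma cube_Suc_Int_sum_code:
  "cube (Suc n) k \<inter> sum_code (Suc n) t = (\<lambda>(xs, z). z # xs) `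
     (SIGMA xs:cube n k. {z \<in> {- int k..int k}. (t + 1) dvd z + sum_list xs})"
proof (intro equalityI subsetI)
  fix x assume "x \<in> cube (Suc n) k \<inter> sum_code (Suc n) t"
  then obtain z xs where "x = z # xs" "xs \<in> cube n k" "z \<in> {- int k..int k}"
      "(t + 1) dvd z + sum_list xs"
    unfolding cube_eq sum_code_eq by (auto simp: length_Suc_conv)
  then show "x \<in> (\<lambda>(xs, z). z # xs) `
     (SIGMA xs:cube n k. {z \<in> {- int k..int k}. (t + 1) dvd z + sum_list xs})" by force
qed (auto simp: cube_eq sum_code_eq)

lemma card_cube_Suc_Int_sum_code:
  "card (cube (Suc n) k \<inter> sum_code (Suc n) t) =
     (\<Sum>xs\<in>cube n k. card {z \<in> {- int k..int k}. (t + 1) dvd z + sum_list xs})"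
proof -
  have "finite {z \<in> {- int k..int k}. (t + 1) dvd z + sum_list xs}" for xs
    by (rule finite_subset[OF _ finite_atLeastAtMost_int]) auto
  then show ?thesis
    unfolding cube_Suc_Int_sum_code
    by (subst card_image) (auto simp: inj_on_def finite_cube intro!: card_SigmaI)
qed

lemma density_ratio_sum_code:
  assumes "t \<ge> 0"
  shows "\<bar>density_ratio (Suc n) (sum_code (Suc n) t) k - 1 / real_of_int (t + 1)\<bar>
    \<le> 1 / real (2 * k + 1)"
proof -
  define L where "L = real (2 * k + 1)"
  define F where "F xs = real (card {z \<in> {- int k..int k}. (t + 1) dvd z + sum_list xs})"
    for xs
  have L: "L > 0" unfolding L_def by simp
  have real_L: "real (2 * k + 1) = L" unfolding L_def by simp
  have F: "\<bar>F xs - L / (t + 1)\<bar> \<le> 1" for xs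
    using card_multiples_in_interval[of "t + 1" "- int k" "int k" "sum_list xs"] assms
    unfolding F_def L_def by (simp add: add_ac)
  have "\<bar>real (card (cube (Suc n) k \<inter> sum_code (Suc n) t)) - L ^ Suc n / (t + 1)\<bar>
      = \<bar>\<Sum>xs\<in>cube n k. F xs - L / (t + 1)\<bar>"
    by (simp add: card_cube_Suc_Int_sum_code F_def sum_subtractf card_cube L_def mult.commute)
  also have "\<dots> \<le> (\<Sum>xs\<in>cube n k. 1)"
    using F by (intro order_trans[OF sum_abs sum_mono])
  also have "\<dots> = L ^ n"
    by (simp add: card_cube L_def)
  finally have "\<bar>real (card (cube (Suc n) k \<inter> sum_code (Suc n) t)) - L ^ Suc n / (t + 1)\<bar>
      \<le> L ^ n" .
  moreover have "density_ratio (Suc n) (sum_code (Suc n) t) k - 1 / (t + 1)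
      = (real (card (cube (Suc n) k \<inter> sum_code (Suc n) t)) - L ^ Suc n / (t + 1)) / L ^ Suc n"
    using L unfolding density_ratio_def real_L by (simp add: Int_commute diff_divide_distrib)
  ultimately show ?thesis
    using L unfolding real_L by (simp add: divide_le_eq)
qed

lemma tendsto_inverse_odd: "(\<lambda>k. 1 / real (2 * k + 1)) \<longlonglongrightarrow> 0"
proof (rule Lim_null_comparison[OF _ LIMSEQ_inverse_real_of_nat])
  show "\<forall>\<^sub>F k in sequentially. norm (1 / real (2 * k + 1)) \<le> inverse (real (Suc k))"
    by (intro always_eventually allI) (simp add: field_simps)
qed

lemma has_density_sum_code:
  assumes "n > 0" "t \<ge> 0"
  shows "has_density n (sum_code n t) (1 / real_of_int (t + 1))"
proof -
  obtain n' where n: "n = Suc n'" using assms(1) by (cases n) auto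
  from tendsto_inverse_odd
  have "(\<lambda>k. density_ratio n (sum_code n t) k - 1 / real_of_int (t + 1)) \<longlonglongrightarrow> 0"
    by (rule Lim_null_comparison[rotated])
      (use density_ratio_sum_code[OF assms(2)] in \<open>simp add: n always_eventually\<close>)
  then show ?thesis unfolding has_density_def by (simp add: LIM_zero_iff)
qed

lemma sum_list_Out_bounds:
  assumes "y \<in> Out a h t x" "y \<noteq> x"
  shows "0 < sum_list y - sum_list x \<and> sum_list y - sum_list x \<le> t"
proof -
  have len: "length y = length x" and nonneg: "\<forall>i<length x. 0 \<le> y ! i - x ! i"
    and le: "(\<Sum>i<length x. y ! i - x ! i) \<le> t"
    using assms(1) by (auto simp: Out_def)
  have diff: "sum_list y - sum_list x = (\<Sum>i<length x. y ! i - x ! i)"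
    using len by (simp add: sum_list_sum_nth atLeast0LessThan sum_subtractf)
  have "(\<Sum>i<length x. y ! i - x ! i) \<noteq> 0"
  proof
    assume "(\<Sum>i<length x. y ! i - x ! i) = 0"
    then have "\<forall>i<length x. y ! i = x ! i"
      using nonneg by (subst (asm) sum_nonneg_eq_0_iff) auto
    with len assms(2) show False by (simp add: list_eq_iff_nth_eq)
  qed
  moreover have "0 \<le> (\<Sum>i<length x. y ! i - x ! i)"
    using nonneg by (intro sum_nonneg) auto
  ultimately show ?thesis
    unfolding diff using le by linarith
qed

lemma AED_code_sum_code: "AED_code n a h t (sum_code n t)"
  unfolding AED_code_def
proof (intro conjI ballI impI)
  show "sum_code n t \<subseteq> words n" by (auto simp: sum_code_def)
next
  fix x y assume x: "x \<in> sum_code n t" and y: "y \<in> Out a h t x" "y \<noteq> x"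
  then have gap: "0 < sum_list y - sum_list x" "sum_list y - sum_list x \<le> t"
    using sum_list_Out_bounds by blast+
  show "y \<notin> sum_code n t"
  proof
    assume "y \<in> sum_code n t"
    with x have "(t + 1) dvd sum_list y - sum_list x"
      by (auto simp: sum_code_eq)
    with gap show False by (auto dest: zdvd_imp_le)
  qed
qed

lemma AED_code_eq_if_in_Out:
  assumes "AED_code n a h t C" "x \<in> C" "x' \<in> C" "x \<in> Out a h t x'"
  shows "x = x'"
  using assms unfolding AED_code_def by blast

definition translate :: "int list \<Rightarrow> (nat \<Rightarrow> int) \<Rightarrow> int list" where
  "translate x e = map (\<lambda>i. x ! i + e i) [0..<length x]"

lemma length_translate [simp]: "length (translate x e) = length x"
  by (simp add: translate_def)

lemma nth_translate [simp]: "i < length x \<Longrightarrow> translate x e ! i = x ! i + e i"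
  by (simp add: translate_def)

lemma translate_in_Out:
  assumes "\<forall>i<length x. 0 \<le> e i \<and> e i \<le> a" "card {i. i < length x \<and> e i \<noteq> 0} \<le> h"
    "(\<Sum>i<length x. e i) \<le> t"
  shows "translate x e \<in> Out a h t x"
proof -
  have "{i. i < length x \<and> translate x e ! i \<noteq> x ! i} = {i. i < length x \<and> e i \<noteq> 0}"
    by auto
  with assms show ?thesis by (simp add: Out_def)
qed

definition stair :: "int \<Rightarrow> int \<Rightarrow> nat \<Rightarrow> int" where
  "stair a j i = max 0 (min a (j - int i * a))"

lemma stair_bounds: "0 \<le> a \<Longrightarrow> 0 \<le> stair a j i \<and> stair a j i \<le> a"
  by (simp add: stair_def)

lemma sum_stair:
  assumes "a > 0" "j \<ge> 0"
  shows "(\<Sum>i<n. stair a j i) = min j (int n * a)"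
proof (induction n)
  case (Suc n)
  then show ?case
    using assms by (auto simp: stair_def min_def max_def algebra_simps)
qed (use assms in simp)

lemma stair_diff_in_Out:
  assumes "a > 0" "t \<le> a * int h" "h \<le> length x" "0 \<le> i" "i \<le> j" "j \<le> t"
  shows "translate x (\<lambda>c. stair a j c - stair a i c) \<in> Out a h t x"
proof (rule translate_in_Out)
  show "\<forall>c<length x. 0 \<le> stair a j c - stair a i c \<and> stair a j c - stair a i c \<le> a"
    using assms by (auto simp: stair_def)
  have zero: "stair a j c = 0" "stair a i c = 0" if "h \<le> c" for c
  proof -
    have "a * int h \<le> a * int c" using that assms(1) by simp
    then have "j \<le> int c * a" "i \<le> int c * a"
      using assms(2,5,6) by (simp_all add: mult.commute)
    then show "stair a j c = 0" "stair a i c = 0"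
      using assms(1) by (simp_all add: stair_def)
  qed
  have "{c. c < length x \<and> stair a j c - stair a i c \<noteq> 0} \<subseteq> {..<h}"
  proof (rule subsetI, rule ccontr)
    fix c assume "c \<in> {c. c < length x \<and> stair a j c - stair a i c \<noteq> 0}" "c \<notin> {..<h}"
    then show False using zero[of c] by simp
  qed
  then show "card {c. c < length x \<and> stair a j c - stair a i c \<noteq> 0} \<le> h"
    using card_mono[of "{..<h}"] by fastforce
  have "int h * a \<le> int (length x) * a" using assms(1,3) by simp
  then show "(\<Sum>c<length x. stair a j c - stair a i c) \<le> t"
    using assms by (simp add: sum_subtractf sum_stair algebra_simps)
qed

lemma inj_on_translate_stair:
  assumes "AED_code n a h t C" "a > 0" "t \<le> a * int h" "h \<le> n"
  shows "inj_on (\<lambda>(x, j). translate x (stair a j)) (C \<times> {0..t})"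
proof -
  have eq: "x = x' \<and> i = j"
    if x: "x \<in> C" "x' \<in> C" and ij: "0 \<le> i" "i \<le> j" "j \<le> t"
      and tr: "translate x (stair a i) = translate x' (stair a j)" for x x' i j
  proof -
    have len: "length x = n" "length x' = n"
      using x assms(1) by (auto simp: AED_code_def words_def)
    have nth: "x ! c + stair a i c = x' ! c + stair a j c" if "c < n" for c
      using arg_cong[OF tr, of "\<lambda>y. y ! c"] that len by simp
    have "x = translate x' (\<lambda>c. stair a j c - stair a i c)"
      using len nth by (intro nth_equalityI) (auto simp: algebra_simps)
    also have "\<dots> \<in> Out a h t x'"
      using assms(2-4) ij len by (intro stair_diff_in_Out) auto
    finally have "x = x'"
      using AED_code_eq_if_in_Out[OF assms(1) x] by blast
    with nth have "(\<Sum>c<n. stair a i c) = (\<Sum>c<n. stair a j c)" by simp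
    moreover have "a * int h \<le> a * int n" using assms(2,4) by simp
    ultimately have "i = j"
      using assms(2,3) ij by (simp add: sum_stair mult.commute min_def split: if_splits)
    with \<open>x = x'\<close> show ?thesis ..
  qed
  show ?thesis
  proof (rule inj_onI)
    fix p q assume "p \<in> C \<times> {0..t}" "q \<in> C \<times> {0..t}"
      and "(\<lambda>(x, j). translate x (stair a j)) p = (\<lambda>(x, j). translate x (stair a j)) q"
    moreover obtain x j x' j' where "p = (x, j)" "q = (x', j')" by fastforce
    ultimately show "p = q"
      using eq[of x x' j j'] eq[of x' x j' j] by (cases "j \<le> j'") auto
  qed
qed

lemma card_AED_code_cube_le:
  assumes "AED_code n a h t C" "a > 0" "t \<le> a * int h" "h \<le> n"
  shows "card (C \<inter> cube n k) * nat (t + 1) \<le> (2 * (k + nat a) + 1) ^ n"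
proof -
  let ?f = "\<lambda>(x, j). translate x (stair a j)"
  have "inj_on ?f ((C \<inter> cube n k) \<times> {0..t})"
    using inj_on_translate_stair[OF assms] by (rule inj_on_subset) auto
  moreover have "?f ` ((C \<inter> cube n k) \<times> {0..t}) \<subseteq> cube n (k + nat a)"
  proof clarify
    fix x j assume x: "x \<in> C" "x \<in> cube n k"
    have "- int (k + nat a) \<le> x ! c + stair a j c \<and> x ! c + stair a j c \<le> int (k + nat a)"
      if "c < n" for c
      using x that stair_bounds[of a j c] assms(2) by (auto simp: cube_def)
    with x show "translate x (stair a j) \<in> cube n (k + nat a)"
      by (simp add: cube_def words_def)
  qed
  ultimately have "card ((C \<inter> cube n k) \<times> {0..t}) \<le> card (cube n (k + nat a))"
    by (intro card_inj_on_le finite_cube)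
  then show ?thesis by (simp add: card_cartesian_product card_cube)
qed

lemma upper_density_AED_code_le:
  assumes "AED_code n a h t C" "a > 0" "t \<ge> 0" "t \<le> a * int h" "h \<le> n"
  shows "upper_density n C \<le> ereal (1 / real_of_int (t + 1))"
proof -
  define g where
    "g k = (real (2 * (k + nat a) + 1) / real (2 * k + 1)) ^ n / real_of_int (t + 1)" for k
  have ratio_le: "density_ratio n C k \<le> g k" for k
  proof -
    have "real (card (C \<inter> cube n k) * nat (t + 1)) \<le> real ((2 * (k + nat a) + 1) ^ n)"
      using card_AED_code_cube_le[OF assms(1,2,4,5)] by (simp only: of_nat_le_iff)
    then have "real (card (C \<inter> cube n k)) \<le> real (2 * (k + nat a) + 1) ^ n / real_of_int (t + 1)"
      using assms(3) by (simp add: pos_le_divide_eq)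
    then have "density_ratio n C k
        \<le> real (2 * (k + nat a) + 1) ^ n / real_of_int (t + 1) / real (2 * k + 1) ^ n"
      unfolding density_ratio_def by (rule divide_right_mono) simp
    then show ?thesis by (simp add: g_def power_divide mult.commute)
  qed
  have "(\<lambda>k. real (2 * (k + nat a) + 1) / real (2 * k + 1))
      = (\<lambda>k. 1 + 2 * real (nat a) * (1 / real (2 * k + 1)))"
    by (rule ext) (simp add: field_simps)
  moreover have "(\<lambda>k. 1 + 2 * real (nat a) * (1 / real (2 * k + 1)))
      \<longlonglongrightarrow> 1 + 2 * real (nat a) * 0"
    by (intro tendsto_intros tendsto_inverse_odd)
  ultimately have "(\<lambda>k. real (2 * (k + nat a) + 1) / real (2 * k + 1)) \<longlonglongrightarrow> 1"
    by simp
  then have "g \<longlonglongrightarrow> 1 ^ n / real_of_int (t + 1)"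
    unfolding g_def using assms(3) by (intro tendsto_intros) auto
  then have g_lim: "(\<lambda>k. ereal (g k)) \<longlonglongrightarrow> ereal (1 / real_of_int (t + 1))"
    by (simp add: lim_ereal)
  have "upper_density n C \<le> limsup (\<lambda>k. ereal (g k))"
    unfolding upper_density_def using ratio_le by (intro Limsup_mono always_eventually) auto
  also have "\<dots> = ereal (1 / real_of_int (t + 1))"
    using g_lim by (rule lim_imp_Limsup[rotated]) simp
  finally show ?thesis .
qed

theorem theorem2:
  fixes n h :: nat and a t :: int
  assumes "n > 0" "h > 0" "a > 0" "t > 0"
    and "h \<le> n" "a \<le> t" "t \<le> a * int h"
  shows "AED_code n a h t (sum_code n t)
    \<and> has_density n (sum_code n t) (1 / real_of_int (t + 1))
    \<and> (\<forall>C. AED_code n a h t C \<longrightarrow> upper_density n C \<le> ereal (1 / real_of_int (t + 1)))"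
  using AED_code_sum_code has_density_sum_code[OF assms(1) less_imp_le[OF assms(4)]]
    upper_density_AED_code_le assms by simp

end
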